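(* Let $\Omega\subset\mathbb{R}^n$ be open and let $p\in L^2(\Omega)$ be harmonic in $\Omega$. Then for every $\phi\in C^\infty_c(\Omega)$ and every $m\in\mathbb{N}$, $$\int_\Omega|\nabla^mp|^2\phi\,dx=\frac1{2^m}\int_\Omega p^2\,\Delta^m\phi\,dx,$$ where $|\nabla^mp|^2=\sum_{i_1,\dots,i_m=1}^n|\partial_{i_1}\cdots\partial_{i_m}p|^2$. *)

theory Defs
  imports "HOL-Analysis.Analysis"
begin

definition partial :: "'n::finite \<Rightarrow> (real^'n \<Rightarrow> real) \<Rightarrow> real^'n \<Rightarrow> real" where
  "partial i f x = deriv (\<lambda>t. f (x + t *\<^sub>R axis i 1)) 0"

fun dpart :: "'n::finite list \<Rightarrow> (real^'n \<Rightarrow> real) \<Rightarrow> real^'n \<Rightarrow> real" where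
  "dpart [] f = f"
| "dpart (i # is) f = partial i (dpart is f)"

definition grad_sq :: "nat \<Rightarrow> (real^'n::finite \<Rightarrow> real) \<Rightarrow> real^'n \<Rightarrow> real" where
  "grad_sq m f x = (\<Sum>is\<in>{is. length is = m}. (dpart is f x)\<^sup>2)"

definition lap :: "(real^'n::finite \<Rightarrow> real) \<Rightarrow> real^'n \<Rightarrow> real" where
  "lap f x = (\<Sum>i\<in>UNIV. partial i (partial i f) x)"

text \<open>C^infinity on an open set: every iterated partial derivative is (Frechet)
  differentiable on the set (hence all partials exist and are continuous).\<close>
definition smooth_on :: "(real^'n::finite) set \<Rightarrow> (real^'n \<Rightarrow> real) \<Rightarrow> bool" where
  "smooth_on S f \<longleftrightarrow> (\<forall>is. dpart is f differentiable_on S)"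

definition harmonic_on :: "(real^'n::finite) set \<Rightarrow> (real^'n \<Rightarrow> real) \<Rightarrow> bool" where
  "harmonic_on S f \<longleftrightarrow> smooth_on S f \<and> (\<forall>x\<in>S. lap f x = 0)"

definition L2_on :: "(real^'n::finite) set \<Rightarrow> (real^'n \<Rightarrow> real) \<Rightarrow> bool" where
  "L2_on S f \<longleftrightarrow> set_borel_measurable lborel S f \<and> set_integrable lborel S (\<lambda>x. (f x)\<^sup>2)"

definition test_function :: "(real^'n::finite) set \<Rightarrow> (real^'n \<Rightarrow> real) \<Rightarrow> bool" where
  "test_function S \<phi> \<longleftrightarrow> smooth_on S \<phi> \<and> compact (closure {x. \<phi> x \<noteq> 0})
     \<and> closure {x. \<phi> x \<noteq> 0} \<subseteq> S"

end

theory Submission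
  imports Defs
begin

text \<open>
  For a smooth \<open>w\<close> one has \<open>\<Delta>(w\<^sup>2) = 2 w \<Delta>w + 2 |\<nabla>w|\<^sup>2\<close>. All iterated partial
  derivatives of a harmonic \<open>p\<close> are harmonic, because partial derivatives of smooth functions
  commute; summing over the multi-indices gives
  \<open>\<Delta>|\<nabla>\<^sup>mp|\<^sup>2 = 2 |\<nabla>\<^sup>m\<^sup>+\<^sup>1p|\<^sup>2\<close> in \<open>\<Omega>\<close>. Moving the Laplacian onto the test function by
  Green's formula (two integrations by parts, whose boundary terms vanish by compact support)
  yields \<open>\<integral>|\<nabla>\<^sup>m\<^sup>+\<^sup>1p|\<^sup>2\<phi> = \<integral>|\<nabla>\<^sup>mp|\<^sup>2 \<Delta>\<phi> / 2\<close>, and the claim follows by induction on \<open>m\<close>,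
  \<open>\<Delta>\<phi>\<close> again being a test function. Every integrand vanishes outside the support of a test
  function.
\<close>

section \<open>Partial derivatives\<close>

lemma has_real_derivative_along_line:
  fixes f :: "real^'n::finite \<Rightarrow> real"
  assumes "(f has_derivative f') (at (x + s *\<^sub>R v))"
  shows "((\<lambda>t. f (x + t *\<^sub>R v)) has_real_derivative f' v) (at s)"
proof -
  have "((\<lambda>t. x + t *\<^sub>R v) has_derivative (\<lambda>t. t *\<^sub>R v)) (at s)"
    by (auto intro!: derivative_eq_intros)
  from has_derivative_compose[OF this assms]
  have "((\<lambda>t. f (x + t *\<^sub>R v)) has_derivative (\<lambda>t. f' (t *\<^sub>R v))) (at s)"
    by (simp add: o_def)
  moreover have "(\<lambda>t. f' (t *\<^sub>R v)) = (*) (f' v)"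
    using has_derivative_bounded_linear[OF assms]
    by (auto simp: fun_eq_iff linear_simps bounded_linear.linear)
  ultimately show ?thesis by (simp add: has_field_derivative_def)
qed

lemma partial_eqI:
  assumes "(f has_derivative f') (at x)" "f' (axis i 1) = D"
  shows "partial i f x = D"
proof -
  have "((\<lambda>t. f (x + t *\<^sub>R axis i 1)) has_real_derivative f' (axis i 1)) (at 0)"
    by (rule has_real_derivative_along_line) (use assms in simp)
  then show ?thesis unfolding partial_def using assms(2) by (simp add: DERIV_imp_deriv)
qed

lemma partial_eq_frechet_derivative:
  "f differentiable (at x) \<Longrightarrow> partial i f x = frechet_derivative f (at x) (axis i 1)"
  using frechet_derivative_works partial_eqI by blast

lemma has_real_derivative_partial:
  fixes f :: "real^'n::finite \<Rightarrow> real"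
  assumes "f differentiable (at (x + s *\<^sub>R axis i 1))"
  shows "((\<lambda>t. f (x + t *\<^sub>R axis i 1)) has_real_derivative partial i f (x + s *\<^sub>R axis i 1)) (at s)"
  using has_real_derivative_along_line[OF assms[unfolded frechet_derivative_works]]
    partial_eq_frechet_derivative[OF assms] by simp

lemma partial_cong_open:
  assumes "open S" "x \<in> S" "\<And>y. y \<in> S \<Longrightarrow> f y = g y"
  shows "partial i f x = partial i g x"
proof -
  obtain r where r: "r > 0" "ball x r \<subseteq> S" using assms(1,2) openE by blast
  have "\<forall>\<^sub>F t in nhds 0. f (x + t *\<^sub>R axis i 1) = g (x + t *\<^sub>R axis i 1)"
    unfolding eventually_nhds_metric
  proof (intro exI[of _ r] conjI allI impI)
    fix t :: real assume "dist t 0 < r"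
    then have "x + t *\<^sub>R axis i 1 \<in> ball x r" by (simp add: dist_norm)
    then show "f (x + t *\<^sub>R axis i 1) = g (x + t *\<^sub>R axis i 1)" using r assms(3) by blast
  qed (use r in auto)
  then show ?thesis unfolding partial_def by (rule deriv_cong_ev) simp
qed

lemma dpart_cong_open:
  assumes "open S" "x \<in> S" "\<And>y. y \<in> S \<Longrightarrow> f y = g y"
  shows "dpart is f x = dpart is g x"
  using assms(2)
proof (induction "is" arbitrary: x)
  case (Cons i "is")
  then show ?case using partial_cong_open[OF assms(1) Cons.prems Cons.IH] by simp
qed (use assms in simp)

lemma dpart_append: "dpart (is @ js) f = dpart is (dpart js f)"
  by (induction "is") auto

lemma partial_const [simp]: "partial i (\<lambda>_. c) x = 0"
  by (rule partial_eqI[where f'="\<lambda>_. 0"]) auto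

lemma dpart_const: "dpart is (\<lambda>_. c) = (\<lambda>_. if is = [] then c else 0)"
  by (induction "is") simp_all

lemma dpart_eq_0_outside:
  assumes "closed K" "\<And>y. y \<notin> K \<Longrightarrow> f y = 0" "x \<notin> K"
  shows "dpart is f x = 0"
proof -
  have "dpart is f x = dpart is (\<lambda>_. 0) x"
    by (rule dpart_cong_open[of "- K"]) (use assms in auto)
  then show ?thesis by (simp add: dpart_const)
qed

lemma partial_sum:
  assumes "finite A" "\<And>a. a \<in> A \<Longrightarrow> f a differentiable (at x)"
  shows "partial i (\<lambda>y. \<Sum>a\<in>A. f a y) x = (\<Sum>a\<in>A. partial i (f a) x)"
proof (rule partial_eqI)
  show "((\<lambda>y. \<Sum>a\<in>A. f a y) has_derivative (\<lambda>h. \<Sum>a\<in>A. frechet_derivative (f a) (at x) h)) (at x)"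
    using assms by (intro has_derivative_sum) (auto simp: frechet_derivative_works)
  show "(\<Sum>a\<in>A. frechet_derivative (f a) (at x) (axis i 1)) = (\<Sum>a\<in>A. partial i (f a) x)"
    using assms by (intro sum.cong) (auto simp: partial_eq_frechet_derivative)
qed

lemma partial_mult:
  assumes "f differentiable (at x)" "g differentiable (at x)"
  shows "partial i (\<lambda>y. f y * g y) x = f x * partial i g x + partial i f x * g x"
proof (rule partial_eqI)
  show "((\<lambda>y. f y * g y) has_derivative
      (\<lambda>h. f x * frechet_derivative g (at x) h + frechet_derivative f (at x) h * g x)) (at x)"
    using assms by (intro has_derivative_mult) (auto simp: frechet_derivative_works)
qed (simp add: partial_eq_frechet_derivative assms)

lemma partial_cmult:
  "f differentiable (at x) \<Longrightarrow> partial i (\<lambda>y. c * f y) x = c * partial i f x"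
  using partial_mult[of "\<lambda>_. c" x f i] by simp

lemma differentiable_on_openD:
  "f differentiable_on S \<Longrightarrow> open S \<Longrightarrow> x \<in> S \<Longrightarrow> f differentiable (at x)"
  using differentiable_on_eq_differentiable_at by blast

lemma differentiable_on_cong_open:
  assumes "open S" "\<And>y. y \<in> S \<Longrightarrow> f y = g y" "f differentiable_on S"
  shows "g differentiable_on S"
  unfolding differentiable_on_eq_differentiable_at[OF assms(1)]
proof
  fix x assume x: "x \<in> S"
  then obtain f' where "(f has_derivative f') (at x)"
    using assms(1,3) differentiable_on_openD differentiable_def by blast
  then have "(g has_derivative f') (at x)"
    by (rule has_derivative_transform_within_open[OF _ assms(1) x assms(2)])
  then show "g differentiable at x" unfolding differentiable_def by blast
qed

lemma smooth_onD: "smooth_on S f \<Longrightarrow> dpart is f differentiable_on S"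
  unfolding smooth_on_def by blast

lemma smooth_on_dpart: "smooth_on S f \<Longrightarrow> smooth_on S (dpart js f)"
  unfolding smooth_on_def by (metis dpart_append)

lemma dpart_sum:
  assumes "open S" "finite A" "\<And>a. a \<in> A \<Longrightarrow> smooth_on S (f a)" "x \<in> S"
  shows "dpart is (\<lambda>y. \<Sum>a\<in>A. f a y) x = (\<Sum>a\<in>A. dpart is (f a) x)"
  using assms(4)
proof (induction "is" arbitrary: x)
  case (Cons i "is")
  have "partial i (dpart is (\<lambda>y. \<Sum>a\<in>A. f a y)) x = partial i (\<lambda>y. \<Sum>a\<in>A. dpart is (f a) y) x"
    by (rule partial_cong_open[OF assms(1) Cons.prems Cons.IH])
  also have "\<dots> = (\<Sum>a\<in>A. partial i (dpart is (f a)) x)"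
    by (rule partial_sum[OF assms(2)]) (use assms Cons.prems differentiable_on_openD smooth_onD in blast)
  finally show ?case by simp
qed simp

lemma smooth_on_sum:
  assumes "open S" "finite A" "\<And>a. a \<in> A \<Longrightarrow> smooth_on S (f a)"
  shows "smooth_on S (\<lambda>y. \<Sum>a\<in>A. f a y)"
  unfolding smooth_on_def
proof
  fix "is"
  have "\<forall>a\<in>A. dpart is (f a) differentiable_on S" using assms(3) smooth_onD by blast
  then have d: "(\<lambda>y. \<Sum>a\<in>A. dpart is (f a) y) differentiable_on S"
    using assms(2) unfolding differentiable_on_def by (auto intro!: differentiable_sum)
  show "dpart is (\<lambda>y. \<Sum>a\<in>A. f a y) differentiable_on S"
    by (rule differentiable_on_cong_open[OF assms(1) _ d]) (simp add: dpart_sum[OF assms])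
qed

section \<open>Symmetry of second partial derivatives\<close>

lemma norm_add_axes_le:
  fixes i j :: "'n::finite"
  assumes "\<bar>a\<bar> \<le> h" "\<bar>b\<bar> \<le> h"
  shows "norm (a *\<^sub>R axis i 1 + b *\<^sub>R axis j 1 :: real^'n) \<le> 2 * h"
  using norm_triangle_ineq[of "a *\<^sub>R axis i (1::real)" "b *\<^sub>R axis j 1"] assms by simp

lemma second_difference_mvt:
  fixes f :: "real^'n::finite \<Rightarrow> real"
  assumes "open S" "f differentiable_on S" "partial i f differentiable_on S"
    "h > 0" "cball x (2 * h) \<subseteq> S"
  obtains \<xi> where "\<xi> \<in> cball x (2 * h)"
    "f (x + h *\<^sub>R axis i 1 + h *\<^sub>R axis j 1) - f (x + h *\<^sub>R axis i 1) - f (x + h *\<^sub>R axis j 1) + f x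
       = h\<^sup>2 * partial j (partial i f) \<xi>"
proof -
  have near: "x + a *\<^sub>R axis i 1 + b *\<^sub>R axis j 1 \<in> cball x (2 * h)"
    if "0 \<le> a" "a \<le> h" "0 \<le> b" "b \<le> h" for a b
  proof -
    have "dist (x + a *\<^sub>R axis i 1 + b *\<^sub>R axis j 1) x \<le> 2 * h"
      using norm_add_axes_le[of a h b i j] that by (simp add: dist_norm add.assoc)
    then show ?thesis by (simp add: dist_commute)
  qed
  have diff_at: "g differentiable (at y)" if "g differentiable_on S" "y \<in> cball x (2 * h)"
    for g :: "real^'n \<Rightarrow> real" and y
    using differentiable_on_openD[OF that(1) assms(1)] that(2) assms(5) by blast
  define \<phi> where "\<phi> s = f (x + h *\<^sub>R axis j 1 + s *\<^sub>R axis i 1) - f (x + s *\<^sub>R axis i 1)" for s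
  have d\<phi>: "(\<phi> has_real_derivative
      partial i f (x + h *\<^sub>R axis j 1 + s *\<^sub>R axis i 1) - partial i f (x + s *\<^sub>R axis i 1)) (at s)"
    if "0 \<le> s" "s \<le> h" for s
    unfolding \<phi>_def
  proof (intro DERIV_diff has_real_derivative_partial)
    show "f differentiable at (x + h *\<^sub>R axis j 1 + s *\<^sub>R axis i 1)"
      using diff_at[OF assms(2) near[of s h]] that assms(4) by (simp add: add_ac)
    show "f differentiable at (x + s *\<^sub>R axis i 1)"
      using diff_at[OF assms(2) near[of s 0]] that assms(4) by simp
  qed
  obtain s where s: "0 < s" "s < h"
    "\<phi> h - \<phi> 0 = (h - 0) * (partial i f (x + h *\<^sub>R axis j 1 + s *\<^sub>R axis i 1) - partial i f (x + s *\<^sub>R axis i 1))"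
    using MVT2[OF assms(4) d\<phi>] by blast
  define \<psi> where "\<psi> t = partial i f (x + s *\<^sub>R axis i 1 + t *\<^sub>R axis j 1)" for t
  have d\<psi>: "(\<psi> has_real_derivative partial j (partial i f) (x + s *\<^sub>R axis i 1 + t *\<^sub>R axis j 1)) (at t)"
    if "0 \<le> t" "t \<le> h" for t
    unfolding \<psi>_def
    by (rule has_real_derivative_partial) (use diff_at[OF assms(3) near[of s t]] that s in simp)
  obtain t where t: "0 < t" "t < h"
    "\<psi> h - \<psi> 0 = (h - 0) * partial j (partial i f) (x + s *\<^sub>R axis i 1 + t *\<^sub>R axis j 1)"
    using MVT2[OF assms(4) d\<psi>] by blast
  have "f (x + h *\<^sub>R axis i 1 + h *\<^sub>R axis j 1) - f (x + h *\<^sub>R axis i 1) - f (x + h *\<^sub>R axis j 1) + f x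
      = \<phi> h - \<phi> 0"
    by (simp add: \<phi>_def add_ac)
  also have "\<dots> = h * (\<psi> h - \<psi> 0)"
    using s(3) by (simp add: \<psi>_def add_ac)
  also have "\<dots> = h\<^sup>2 * partial j (partial i f) (x + s *\<^sub>R axis i 1 + t *\<^sub>R axis j 1)"
    using t(3) by (simp add: power2_eq_square)
  finally show ?thesis
    using s t by (intro that[of "x + s *\<^sub>R axis i 1 + t *\<^sub>R axis j 1"] near) auto
qed

lemma LIMSEQ_in_shrinking_cballs:
  fixes p :: "nat \<Rightarrow> 'a::real_normed_vector"
  assumes "\<And>n. p n \<in> cball x (r n)" "r \<longlonglongrightarrow> 0"
  shows "p \<longlonglongrightarrow> x"
proof -
  have "(\<lambda>n. p n - x) \<longlonglongrightarrow> 0"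
    by (rule Lim_null_comparison[OF _ assms(2)]) (use assms(1) in \<open>auto simp: dist_norm norm_minus_commute\<close>)
  then show ?thesis by (simp add: LIM_zero_iff)
qed

text \<open>Schwarz's theorem: both mixed partials are limits of the same second difference quotients.\<close>

lemma partial_commute:
  fixes f :: "real^'n::finite \<Rightarrow> real"
  assumes "open S" "x \<in> S" "smooth_on S f"
  shows "partial j (partial i f) x = partial i (partial j f) x"
proof -
  have diff: "f differentiable_on S" "partial i f differentiable_on S" "partial j f differentiable_on S"
    using smooth_onD[OF assms(3), of "[]"] smooth_onD[OF assms(3), of "[i]"]
      smooth_onD[OF assms(3), of "[j]"] by auto
  have cont: "isCont (partial l (partial k f)) x" for k l
    using smooth_onD[OF assms(3), of "[l, k]"] assms(1,2)
    by (simp add: differentiable_on_openD differentiable_imp_continuous_within)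
  obtain r where r: "r > 0" "cball x r \<subseteq> S" using assms(1,2) open_contains_cball by blast
  define h where "h n = r / 2 * inverse (real (Suc n))" for n
  have h: "h n > 0" "cball x (2 * h n) \<subseteq> S" for n
  proof -
    show "h n > 0" using r(1) by (simp add: h_def)
    have "2 * h n \<le> r" using r(1) by (simp add: h_def field_simps)
    then show "cball x (2 * h n) \<subseteq> S" using r(2) by auto
  qed
  have h0: "(\<lambda>n. 2 * h n) \<longlonglongrightarrow> 0"
    unfolding h_def by (intro tendsto_mult_right_zero LIMSEQ_inverse_real_of_nat)
  define \<Delta> where "\<Delta> k l n = f (x + h n *\<^sub>R axis k 1 + h n *\<^sub>R axis l 1)
      - f (x + h n *\<^sub>R axis k 1) - f (x + h n *\<^sub>R axis l 1) + f x" for k l n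
  have ex: "\<forall>n. \<exists>\<xi>. \<xi> \<in> cball x (2 * h n) \<and> \<Delta> k l n = (h n)\<^sup>2 * partial l (partial k f) \<xi>"
    if "partial k f differentiable_on S" for k l
    unfolding \<Delta>_def by (intro allI, rule second_difference_mvt[OF assms(1) diff(1) that h]) blast
  obtain \<xi> where \<xi>: "\<And>n. \<xi> n \<in> cball x (2 * h n) \<and> \<Delta> i j n = (h n)\<^sup>2 * partial j (partial i f) (\<xi> n)"
    using choice[OF ex[OF diff(2)]] by blast
  obtain \<eta> where \<eta>: "\<And>n. \<eta> n \<in> cball x (2 * h n) \<and> \<Delta> j i n = (h n)\<^sup>2 * partial i (partial j f) (\<eta> n)"
    using choice[OF ex[OF diff(3)]] by blast
  have "\<xi> \<longlonglongrightarrow> x" by (rule LIMSEQ_in_shrinking_cballs[OF _ h0]) (use \<xi> in blast)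
  then have lim: "(\<lambda>n. partial j (partial i f) (\<xi> n)) \<longlonglongrightarrow> partial j (partial i f) x"
    by (rule isCont_tendsto_compose[OF cont])
  have "\<eta> \<longlonglongrightarrow> x" by (rule LIMSEQ_in_shrinking_cballs[OF _ h0]) (use \<eta> in blast)
  then have lim': "(\<lambda>n. partial i (partial j f) (\<eta> n)) \<longlonglongrightarrow> partial i (partial j f) x"
    by (rule isCont_tendsto_compose[OF cont])
  have same: "partial j (partial i f) (\<xi> n) = partial i (partial j f) (\<eta> n)" for n
  proof -
    have "\<Delta> i j n = \<Delta> j i n" by (simp add: \<Delta>_def add_ac)
    then show ?thesis using \<xi>[of n] \<eta>[of n] h(1)[of n] by simp
  qed
  show ?thesis using LIMSEQ_unique[OF lim lim'[folded same]] .
qed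

lemma dpart_Cons_eq_snoc:
  assumes "open S" "smooth_on S f" "x \<in> S"
  shows "dpart (k # is) f x = dpart (is @ [k]) f x"
  using assms(3)
proof (induction "is" arbitrary: x)
  case (Cons j js)
  have "dpart (k # j # js) f x = partial k (partial j (dpart js f)) x" by simp
  also have "\<dots> = partial j (partial k (dpart js f)) x"
    by (rule partial_commute[OF assms(1) Cons.prems smooth_on_dpart[OF assms(2)]])
  also have "\<dots> = partial j (dpart (js @ [k]) f) x"
    by (rule partial_cong_open[OF assms(1) Cons.prems]) (use Cons.IH in simp)
  finally show ?case by simp
qed simp

lemma lap_eq_sum_dpart: "lap f = (\<lambda>y. \<Sum>k\<in>UNIV. dpart [k, k] f y)"
  by (simp add: lap_def fun_eq_iff)

lemma harmonic_on_dpart: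
  assumes "open S" "harmonic_on S p"
  shows "harmonic_on S (dpart is p)"
proof -
  have smooth: "smooth_on S p" and harmonic: "\<And>y. y \<in> S \<Longrightarrow> lap p y = 0"
    using assms(2) unfolding harmonic_on_def by auto
  have "lap (dpart is p) x = 0" if x: "x \<in> S" for x
  proof -
    have "dpart (k # k # is) p x = dpart is (dpart [k, k] p) x" for k
    proof -
      have "dpart (k # k # is) p x = partial k (dpart (is @ [k]) p) x"
        using partial_cong_open[OF assms(1) x dpart_Cons_eq_snoc[OF assms(1) smooth]] by simp
      also have "\<dots> = dpart ((is @ [k]) @ [k]) p x"
        using dpart_Cons_eq_snoc[OF assms(1) smooth x, of k "is @ [k]"] by simp
      finally show ?thesis by (simp add: dpart_append)
    qed
    then have "lap (dpart is p) x = (\<Sum>k\<in>UNIV. dpart is (dpart [k, k] p) x)"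
      by (simp add: lap_def)
    also have "\<dots> = dpart is (lap p) x"
      unfolding lap_eq_sum_dpart
      by (rule dpart_sum[symmetric, OF assms(1) _ smooth_on_dpart[OF smooth] x]) simp
    also have "\<dots> = dpart is (\<lambda>_. 0) x"
      by (rule dpart_cong_open[OF assms(1) x harmonic])
    finally show ?thesis by (simp add: dpart_const)
  qed
  then show ?thesis using smooth_on_dpart[OF smooth] by (simp add: harmonic_on_def)
qed

definition C2_on :: "(real^'n::finite) set \<Rightarrow> (real^'n \<Rightarrow> real) \<Rightarrow> bool" where
  "C2_on S u \<longleftrightarrow> u differentiable_on S \<and> (\<forall>k. partial k u differentiable_on S)
     \<and> (\<forall>k l. continuous_on S (partial l (partial k u)))"

lemma partial_partial_sum:
  assumes "open S" "finite A" "\<And>a. a \<in> A \<Longrightarrow> C2_on S (f a)" "x \<in> S"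
  shows "partial l (partial k (\<lambda>y. \<Sum>a\<in>A. f a y)) x = (\<Sum>a\<in>A. partial l (partial k (f a)) x)"
proof -
  have diff: "f a differentiable (at y)" "partial k (f a) differentiable (at y)"
    if "a \<in> A" "y \<in> S" for a y
    using assms(3)[OF that(1)] assms(1) that(2) by (auto simp: C2_on_def intro: differentiable_on_openD)
  have "partial l (partial k (\<lambda>y. \<Sum>a\<in>A. f a y)) x = partial l (\<lambda>y. \<Sum>a\<in>A. partial k (f a) y) x"
    by (rule partial_cong_open[OF assms(1,4)]) (use assms(2) diff in \<open>simp add: partial_sum\<close>)
  also have "\<dots> = (\<Sum>a\<in>A. partial l (partial k (f a)) x)"
    using assms(2,4) diff by (simp add: partial_sum)
  finally show ?thesis .
qed

lemma C2_on_sum: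
  assumes "open S" "finite A" "\<And>a. a \<in> A \<Longrightarrow> C2_on S (f a)"
  shows "C2_on S (\<lambda>y. \<Sum>a\<in>A. f a y)"
proof -
  have diff: "f a differentiable (at y)" "partial k (f a) differentiable (at y)"
    if "a \<in> A" "y \<in> S" for a y k
    using assms(3)[OF that(1)] assms(1) that(2) by (auto simp: C2_on_def intro: differentiable_on_openD)
  have "(\<lambda>y. \<Sum>a\<in>A. f a y) differentiable_on S"
    using assms(1,2) diff by (auto intro!: differentiable_at_imp_differentiable_on differentiable_sum)
  moreover have "partial k (\<lambda>y. \<Sum>a\<in>A. f a y) differentiable_on S" for k
  proof (rule differentiable_on_cong_open[OF assms(1)])
    show "(\<lambda>y. \<Sum>a\<in>A. partial k (f a) y) differentiable_on S"
      using assms(1,2) diff by (auto intro!: differentiable_at_imp_differentiable_on differentiable_sum)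
  qed (use assms(2) diff in \<open>simp add: partial_sum\<close>)
  moreover have "continuous_on S (partial l (partial k (\<lambda>y. \<Sum>a\<in>A. f a y)))" for k l
  proof -
    have "continuous_on S (\<lambda>y. \<Sum>a\<in>A. partial l (partial k (f a)) y)"
      using assms(3) by (intro continuous_on_sum) (auto simp: C2_on_def)
    then show ?thesis using partial_partial_sum[OF assms] by (simp cong: continuous_on_cong)
  qed
  ultimately show ?thesis by (simp add: C2_on_def)
qed

lemma lap_sum:
  assumes "open S" "finite A" "\<And>a. a \<in> A \<Longrightarrow> C2_on S (f a)" "x \<in> S"
  shows "lap (\<lambda>y. \<Sum>a\<in>A. f a y) x = (\<Sum>a\<in>A. lap (f a) x)"
proof -
  have "lap (\<lambda>y. \<Sum>a\<in>A. f a y) x = (\<Sum>k\<in>UNIV. \<Sum>a\<in>A. partial k (partial k (f a)) x)"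
    unfolding lap_def using partial_partial_sum[OF assms] by simp
  then show ?thesis unfolding lap_def by (simp add: sum.swap[of _ UNIV])
qed

lemma partial_partial_square:
  assumes "open S" "smooth_on S w" "x \<in> S"
  shows "partial l (partial k (\<lambda>y. (w y)\<^sup>2)) x
    = 2 * (partial l w x * partial k w x + w x * partial l (partial k w) x)"
proof -
  have diff: "dpart is w differentiable (at y)" if "y \<in> S" for "is" y
    using smooth_onD[OF assms(2)] assms(1) that by (rule differentiable_on_openD)
  have "partial l (partial k (\<lambda>y. (w y)\<^sup>2)) x = partial l (\<lambda>y. 2 * (w y * partial k w y)) x"
    by (rule partial_cong_open[OF assms(1,3)])
      (use diff[of _ "[]"] in \<open>simp add: power2_eq_square partial_mult\<close>)
  also have "\<dots> = 2 * (partial l w x * partial k w x + w x * partial l (partial k w) x)"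
    using diff[OF assms(3), of "[]"] diff[OF assms(3), of "[k]"]
    by (simp add: partial_cmult partial_mult)
  finally show ?thesis .
qed

lemma C2_on_square:
  assumes "open S" "smooth_on S w"
  shows "C2_on S (\<lambda>y. (w y)\<^sup>2)"
proof -
  have diff: "dpart is w differentiable (at y)" if "y \<in> S" for "is" y
    using smooth_onD[OF assms(2)] assms(1) that by (rule differentiable_on_openD)
  have cont: "continuous_on S (dpart is w)" for "is"
    using smooth_onD[OF assms(2)] by (rule differentiable_imp_continuous_on)
  have "(\<lambda>y. (w y)\<^sup>2) differentiable_on S"
    using diff[of _ "[]"] by (auto simp: power2_eq_square intro!: differentiable_at_imp_differentiable_on)
  moreover have "partial k (\<lambda>y. (w y)\<^sup>2) differentiable_on S" for k
  proof (rule differentiable_on_cong_open[OF assms(1)])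
    show "(\<lambda>y. 2 * (w y * partial k w y)) differentiable_on S"
      using diff[of _ "[]"] diff[of _ "[k]"]
      by (auto intro!: differentiable_at_imp_differentiable_on differentiable_mult)
  qed (use diff[of _ "[]"] in \<open>simp add: power2_eq_square partial_mult\<close>)
  moreover have "continuous_on S (partial l (partial k (\<lambda>y. (w y)\<^sup>2)))" for k l
  proof -
    have "continuous_on S (\<lambda>y. 2 * (partial l w y * partial k w y + w y * partial l (partial k w) y))"
      using cont[of "[l]"] cont[of "[k]"] cont[of "[]"] cont[of "[l, k]"]
      by (auto intro!: continuous_on_mult continuous_on_add)
    then show ?thesis
      using partial_partial_square[OF assms] by (simp cong: continuous_on_cong)
  qed
  ultimately show ?thesis by (simp add: C2_on_def)
qed

text \<open>For harmonic \<open>w\<close> this is Bochner's identity \<open>\<Delta>(w\<^sup>2) = 2 |\<nabla>w|\<^sup>2\<close>.\<close>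

lemma lap_square:
  assumes "open S" "smooth_on S w" "x \<in> S"
  shows "lap (\<lambda>y. (w y)\<^sup>2) x = 2 * w x * lap w x + 2 * (\<Sum>k\<in>UNIV. (partial k w x)\<^sup>2)"
  unfolding lap_def partial_partial_square[OF assms]
  by (simp add: sum.distrib sum_distrib_left power2_eq_square algebra_simps)

lemma sum_lists_length_Suc:
  fixes F :: "'a::finite list \<Rightarrow> 'b::comm_monoid_add"
  shows "(\<Sum>js\<in>{js. length js = Suc m}. F js) = (\<Sum>k\<in>UNIV. \<Sum>is\<in>{is. length is = m}. F (k # is))"
proof -
  have "{js::'a list. length js = Suc m} = (\<lambda>(k, is). k # is) ` (UNIV \<times> {is. length is = m})"
    by (auto simp: length_Suc_conv image_iff)
  moreover have "inj_on (\<lambda>(k, is). k # is) (UNIV \<times> {is::'a list. length is = m})"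
    by (auto simp: inj_on_def)
  ultimately show ?thesis
    by (simp add: sum.reindex sum.cartesian_product case_prod_unfold)
qed

lemma finite_lists_length: "finite {is :: 'a::finite list. length is = m}"
  using finite_lists_length_eq[of "UNIV :: 'a set" m] by simp

lemma C2_on_grad_sq:
  assumes "open S" "smooth_on S p"
  shows "C2_on S (grad_sq m p)"
  unfolding grad_sq_def[abs_def]
  by (rule C2_on_sum[OF assms(1) finite_lists_length C2_on_square[OF assms(1) smooth_on_dpart[OF assms(2)]]])

lemma lap_grad_sq:
  assumes "open S" "harmonic_on S p" "x \<in> S"
  shows "lap (grad_sq m p) x = 2 * grad_sq (Suc m) p x"
proof -
  have smooth: "smooth_on S (dpart is p)" and harmonic: "lap (dpart is p) x = 0" for "is"
    using harmonic_on_dpart[OF assms(1,2)] assms(3) by (auto simp: harmonic_on_def)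
  have "lap (grad_sq m p) x = (\<Sum>is\<in>{is. length is = m}. lap (\<lambda>y. (dpart is p y)\<^sup>2) x)"
    unfolding grad_sq_def[abs_def]
    by (rule lap_sum[OF assms(1) finite_lists_length C2_on_square[OF assms(1) smooth] assms(3)])
  also have "\<dots> = (\<Sum>is\<in>{is. length is = m}. 2 * (\<Sum>k\<in>UNIV. (dpart (k # is) p x)\<^sup>2))"
    by (simp add: lap_square[OF assms(1) smooth assms(3)] harmonic)
  also have "\<dots> = 2 * grad_sq (Suc m) p x"
    by (simp add: grad_sq_def sum_lists_length_Suc sum_distrib_left sum.swap[of _ UNIV])
  finally show ?thesis .
qed

section \<open>Integrals of partial derivatives\<close>

lemma integrable_continuous_compact_support:
  fixes F :: "'a::euclidean_space \<Rightarrow> real"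
  assumes "compact K" "continuous_on K F" "\<And>x. x \<notin> K \<Longrightarrow> F x = 0"
  shows "integrable lborel F"
proof -
  have "(\<lambda>x. indicator K x *\<^sub>R F x) = F"
    using assms(3) by (auto simp: fun_eq_iff indicator_def)
  then show ?thesis using borel_integrable_compact[OF assms(1,2)] by simp
qed

lemma
  fixes f :: "'a::euclidean_space \<Rightarrow> real"
  assumes "integrable lborel f"
  shows integrable_lborel_translate: "integrable lborel (\<lambda>x. f (x + c))"
    and integral_lborel_translate: "integral\<^sup>L lborel (\<lambda>x. f (x + c)) = integral\<^sup>L lborel f"
proof -
  have [measurable]: "f \<in> borel_measurable borel"
    using borel_measurable_integrable[OF assms] by simp
  have "integrable (distr lborel borel ((+) c)) f" using assms by (simp add: lborel_distr_plus)
  then show "integrable lborel (\<lambda>x. f (x + c))" by (simp add: integrable_distr_eq add.commute)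
  have "integral\<^sup>L lborel f = integral\<^sup>L (distr lborel borel ((+) c)) f" by (simp add: lborel_distr_plus)
  also have "\<dots> = integral\<^sup>L lborel (\<lambda>x. f (x + c))" by (simp add: integral_distr add.commute)
  finally show "integral\<^sup>L lborel (\<lambda>x. f (x + c)) = integral\<^sup>L lborel f" ..
qed

lemma vanishing_outside_sums_cball:
  fixes g :: "'a::real_normed_vector \<Rightarrow> 'b::zero"
  assumes "\<And>x. x \<notin> K \<Longrightarrow> g x = 0" "norm v \<le> r" "x \<notin> {a + b | a b. a \<in> K \<and> b \<in> cball 0 r}"
  shows "g (x + v) = 0"
proof (rule ccontr)
  assume "g (x + v) \<noteq> 0"
  then have "x + v \<in> K" using assms(1) by blast
  moreover have "- v \<in> cball 0 r" using assms(2) by simp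
  ultimately have "(x + v) + - v \<in> {a + b | a b. a \<in> K \<and> b \<in> cball 0 r}" by blast
  then show False using assms(3) by simp
qed

lemma bounded_vanishing_outside_compact:
  fixes f :: "'a::topological_space \<Rightarrow> real"
  assumes "compact K" "continuous_on K f" "\<And>x. x \<notin> K \<Longrightarrow> f x = 0"
  obtains B where "\<And>x. \<bar>f x\<bar> \<le> B"
proof -
  obtain B where "\<And>x. x \<in> K \<Longrightarrow> \<bar>f x\<bar> \<le> B"
    using compact_imp_bounded[OF compact_continuous_image[OF assms(2,1)]]
    by (auto simp: bounded_iff)
  then have "\<bar>f x\<bar> \<le> max B 0" for x using assms(3)[of x] by (cases "x \<in> K") (auto simp: le_max_iff_disj)
  then show ?thesis using that by blast
qed

lemma integral_difference_quotient_eq_0: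
  fixes g :: "'a::euclidean_space \<Rightarrow> real"
  assumes "integrable lborel g"
  shows "(LINT x|lborel. (g (x + t *\<^sub>R v) - g x) / t) = 0"
  using assms integrable_lborel_translate[OF assms] by (simp add: integral_lborel_translate[OF assms])

lemma tendsto_difference_quotient_partial:
  assumes "g differentiable (at x)" "filterlim h (at 0) F"
  shows "((\<lambda>n. (g (x + h n *\<^sub>R axis i 1) - g x) / h n) \<longlongrightarrow> partial i g x) F"
proof -
  have "((\<lambda>t. (g (x + t *\<^sub>R axis i 1) - g x) / t) \<longlongrightarrow> partial i g x) (at 0)"
    using has_real_derivative_partial[of g x 0 i] assms(1) by (simp add: DERIV_def)
  then show ?thesis using assms(2) by (rule filterlim_compose)
qed

lemma abs_difference_along_axis_le:
  fixes g :: "real^'n::finite \<Rightarrow> real"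
  assumes "\<And>y. g differentiable (at y)" "\<And>y. \<bar>partial i g y\<bar> \<le> B"
  shows "\<bar>g (x + t *\<^sub>R axis i 1) - g x\<bar> \<le> B * \<bar>t\<bar>"
  using field_differentiable_bound[OF convex_UNIV, of "\<lambda>t. g (x + t *\<^sub>R axis i 1)"
      "\<lambda>t. partial i g (x + t *\<^sub>R axis i 1)" B t 0]
    has_real_derivative_partial[OF assms(1)] assms(2) by (auto intro: has_field_derivative_at_within)

text \<open>The difference quotients of \<open>g\<close> in direction \<open>i\<close> all have integral \<open>0\<close> by translation
  invariance, and converge dominatedly to \<open>partial i g\<close>.\<close>

lemma integral_partial_eq_0:
  fixes g :: "real^'n::finite \<Rightarrow> real"
  assumes K: "compact K" and g0: "\<And>x. x \<notin> K \<Longrightarrow> g x = 0"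
    and diff: "\<And>x. g differentiable (at x)" and cont: "continuous_on UNIV (partial i g)"
  shows "integral\<^sup>L lborel (partial i g) = 0"
proof -
  define K' where "K' = {a + b | a b. a \<in> K \<and> b \<in> cball (0::real^'n) 1}"
  have "compact K'" unfolding K'_def by (rule compact_sums[OF K compact_cball])
  have "K \<subseteq> K'" unfolding K'_def by (force intro: exI[of _ 0])
  have shift0: "g (x + t *\<^sub>R axis i 1) = 0" if "\<bar>t\<bar> \<le> 1" "x \<notin> K'" for x t
    using vanishing_outside_sums_cball[OF g0, where v = "t *\<^sub>R axis i 1" and r = 1 and x = x] that
    by (simp add: K'_def)
  have "dpart [i] g x = 0" if "x \<notin> K" for x
    by (rule dpart_eq_0_outside[OF compact_imp_closed[OF K] g0 that])
  then obtain B where B: "\<bar>partial i g x\<bar> \<le> B" for x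
    using bounded_vanishing_outside_compact[OF K continuous_on_subset[OF cont]] by auto
  have g_cont: "continuous_on UNIV g"
    using diff by (simp add: continuous_at_imp_continuous_on differentiable_imp_continuous_within)
  have [measurable]: "g \<in> borel_measurable borel" "partial i g \<in> borel_measurable borel"
    using g_cont cont by (auto intro: borel_measurable_continuous_onI)
  define h where "h n = inverse (real (Suc n))" for n
  have h: "0 < h n" "h n \<le> 1" for n by (auto simp: h_def field_simps)
  define D where "D n x = (g (x + h n *\<^sub>R axis i 1) - g x) / h n" for n x
  have "(\<lambda>n. integral\<^sup>L lborel (D n)) \<longlonglongrightarrow> integral\<^sup>L lborel (partial i g)"
  proof (rule integral_dominated_convergence[where w="\<lambda>x. B * indicator K' x"])
    show "integrable lborel (\<lambda>x. B * indicator K' x)"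
      using \<open>compact K'\<close>
      by (intro integrable_mult_right integrable_real_indicator emeasure_compact_finite)
        (simp_all add: borel_compact)
    have "filterlim h (at 0) sequentially"
      unfolding filterlim_at h_def using LIMSEQ_inverse_real_of_nat by simp
    then show "AE x in lborel. (\<lambda>n. D n x) \<longlonglongrightarrow> partial i g x"
      unfolding D_def by (intro AE_I2 tendsto_difference_quotient_partial diff)
    show "AE x in lborel. norm (D n x) \<le> B * indicator K' x" for n
    proof (rule AE_I2)
      fix x
      show "norm (D n x) \<le> B * indicator K' x"
      proof (cases "x \<in> K'")
        case True
        then show ?thesis
          using abs_difference_along_axis_le[OF diff B, of x "h n"] h[of n] by (simp add: D_def divide_le_eq)
      next
        case False
        then have "x \<notin> K" using \<open>K \<subseteq> K'\<close> by blast
        then show ?thesis using shift0[of "h n" x] g0[of x] False h[of n] by (simp add: D_def)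
      qed
    qed
    show "D n \<in> borel_measurable lborel" for n
      unfolding D_def by measurable
  qed measurable
  moreover have "integral\<^sup>L lborel (D n) = 0" for n
    unfolding D_def using g_cont g0
    by (intro integral_difference_quotient_eq_0 integrable_continuous_compact_support[OF K])
      (auto intro: continuous_on_subset)
  ultimately show ?thesis by (simp add: LIMSEQ_const_iff)
qed

lemma continuous_on_vanishing_outside:
  assumes "open \<Omega>" "closed K" "K \<subseteq> \<Omega>" "continuous_on \<Omega> F" "\<And>x. x \<notin> K \<Longrightarrow> F x = 0"
  shows "continuous_on UNIV F"
proof -
  have "continuous_on (- K) F"
    using continuous_on_const[of "- K" 0] by (rule continuous_on_eq) (use assms(5) in simp)
  then have "continuous_on (\<Omega> \<union> - K) F"
    using assms(1,2,4) by (intro continuous_on_open_Un) auto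
  moreover have "\<Omega> \<union> - K = UNIV" using assms(3) by blast
  ultimately show ?thesis by simp
qed

lemma differentiable_vanishing_outside:
  assumes "open \<Omega>" "closed K" "K \<subseteq> \<Omega>" "f differentiable_on \<Omega>" "\<And>x. x \<notin> K \<Longrightarrow> f x = 0"
  shows "f differentiable (at x)"
proof (cases "x \<in> \<Omega>")
  case True
  then show ?thesis using differentiable_on_openD[OF assms(4,1)] by blast
next
  case False
  then have "x \<in> - K" using assms(3) by blast
  have "((\<lambda>_. 0) has_derivative (\<lambda>_. 0)) (at x)" by simp
  then have "(f has_derivative (\<lambda>_. 0)) (at x)"
    by (rule has_derivative_transform_within_open[OF _ _ \<open>x \<in> - K\<close>]) (use assms(2,5) in auto)
  then show ?thesis unfolding differentiable_def by blast
qed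

lemma integral_partial_eq_0_open:
  fixes g :: "real^'n::finite \<Rightarrow> real"
  assumes "open \<Omega>" "compact K" "K \<subseteq> \<Omega>" "\<And>x. x \<notin> K \<Longrightarrow> g x = 0"
    and "g differentiable_on \<Omega>" "continuous_on \<Omega> (partial i g)"
  shows "integral\<^sup>L lborel (partial i g) = 0"
proof (rule integral_partial_eq_0[OF assms(2,4)])
  show "g differentiable (at x)" for x
    using differentiable_vanishing_outside[OF assms(1) compact_imp_closed[OF assms(2)] assms(3,5,4)] .
  have "dpart [i] g x = 0" if "x \<notin> K" for x
    by (rule dpart_eq_0_outside[OF compact_imp_closed[OF assms(2)] assms(4) that])
  then show "continuous_on UNIV (partial i g)"
    using continuous_on_vanishing_outside[OF assms(1) compact_imp_closed[OF assms(2)] assms(3,6)] by simp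
qed

lemma test_function_dpart_vanishing:
  assumes "test_function \<Omega> \<phi>" "x \<notin> closure {x. \<phi> x \<noteq> 0}"
  shows "dpart is \<phi> x = 0"
  using closure_subset[of "{x. \<phi> x \<noteq> 0}"] assms(2)
  by (intro dpart_eq_0_outside[OF closed_closure]) auto

lemma test_function_vanishing:
  "test_function \<Omega> \<phi> \<Longrightarrow> x \<notin> \<Omega> \<Longrightarrow> \<phi> x = 0"
  using test_function_dpart_vanishing[of \<Omega> \<phi> x "[]"] by (auto simp: test_function_def)

lemma test_function_support_subset:
  assumes "test_function \<Omega> \<phi>" "smooth_on \<Omega> \<psi>" "\<And>x. \<psi> x \<noteq> 0 \<Longrightarrow> x \<in> closure {x. \<phi> x \<noteq> 0}"
  shows "test_function \<Omega> \<psi>"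
proof -
  have sub: "closure {x. \<psi> x \<noteq> 0} \<subseteq> closure {x. \<phi> x \<noteq> 0}"
    using assms(3) by (intro closure_minimal) auto
  have "compact (closure {x. \<phi> x \<noteq> 0} \<inter> closure {x. \<psi> x \<noteq> 0})"
    using assms(1) by (intro compact_Int_closed) (auto simp: test_function_def)
  then have "compact (closure {x. \<psi> x \<noteq> 0})"
    using sub by (simp only: Int_absorb1)
  then show ?thesis using assms(1,2) sub by (auto simp: test_function_def)
qed

lemma test_function_partial:
  assumes "test_function \<Omega> \<phi>"
  shows "test_function \<Omega> (partial i \<phi>)"
proof (rule test_function_support_subset[OF assms])
  show "smooth_on \<Omega> (partial i \<phi>)"
    using smooth_on_dpart[of \<Omega> \<phi> "[i]"] assms by (simp add: test_function_def)
  show "x \<in> closure {x. \<phi> x \<noteq> 0}" if "partial i \<phi> x \<noteq> 0" for x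
    using test_function_dpart_vanishing[OF assms, of x "[i]"] that by auto
qed

lemma test_function_lap:
  assumes "open \<Omega>" "test_function \<Omega> \<phi>"
  shows "test_function \<Omega> (lap \<phi>)"
proof (rule test_function_support_subset[OF assms(2)])
  show "smooth_on \<Omega> (lap \<phi>)"
    unfolding lap_eq_sum_dpart using assms
    by (intro smooth_on_sum smooth_on_dpart) (auto simp: test_function_def)
  show "x \<in> closure {x. \<phi> x \<noteq> 0}" if "lap \<phi> x \<noteq> 0" for x
  proof (rule ccontr)
    assume x: "x \<notin> closure {x. \<phi> x \<noteq> 0}"
    have "partial k (partial k \<phi>) x = 0" for k
      using test_function_dpart_vanishing[OF assms(2) x, of "[k, k]"] by simp
    then show False using that by (simp add: lap_def)
  qed
qed

lemma test_function_funpow_lap: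
  "open \<Omega> \<Longrightarrow> test_function \<Omega> \<phi> \<Longrightarrow> test_function \<Omega> ((lap ^^ m) \<phi>)"
  by (induction m) (auto intro: test_function_lap)

lemma integrable_mult_test_function:
  fixes F :: "real^'n::finite \<Rightarrow> real"
  assumes "test_function \<Omega> \<phi>" "continuous_on \<Omega> F"
  shows "integrable lborel (\<lambda>x. F x * \<phi> x)"
proof (rule integrable_continuous_compact_support)
  show "compact (closure {x. \<phi> x \<noteq> 0})" using assms(1) by (simp add: test_function_def)
  have "continuous_on \<Omega> \<phi>"
    using smooth_onD[of \<Omega> \<phi> "[]"] assms(1)
    by (auto simp: test_function_def intro: differentiable_imp_continuous_on)
  then show "continuous_on (closure {x. \<phi> x \<noteq> 0}) (\<lambda>x. F x * \<phi> x)"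
    using assms by (auto simp: test_function_def intro: continuous_on_mult continuous_on_subset)
  show "F x * \<phi> x = 0" if "x \<notin> closure {x. \<phi> x \<noteq> 0}" for x
    using test_function_dpart_vanishing[OF assms(1) that, of "[]"] by simp
qed

section \<open>Integration by parts against test functions\<close>

lemma integral_partial_mult_test_function:
  fixes f \<phi> :: "real^'n::finite \<Rightarrow> real"
  assumes "open \<Omega>" "test_function \<Omega> \<phi>" "f differentiable_on \<Omega>" "continuous_on \<Omega> (partial i f)"
  shows "(LINT x|lborel. partial i f x * \<phi> x) = - (LINT x|lborel. f x * partial i \<phi> x)"
proof -
  define K where "K = closure {x. \<phi> x \<noteq> 0}"
  have K: "compact K" "closed K" "K \<subseteq> \<Omega>"
    using assms(2) by (auto simp: K_def test_function_def)
  have vanish: "dpart is \<phi> x = 0" if "x \<notin> K" for "is" x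
    using test_function_dpart_vanishing[OF assms(2)] that by (simp add: K_def)
  have diff_\<phi>: "dpart is \<phi> differentiable (at x)" if "x \<in> \<Omega>" for "is" x
    using assms(1,2) that by (auto simp: test_function_def intro: differentiable_on_openD smooth_onD)
  have cont_\<phi>: "continuous_on \<Omega> (dpart is \<phi>)" for "is"
    using assms(2) by (auto simp: test_function_def intro: differentiable_imp_continuous_on smooth_onD)
  have diff_f: "f differentiable (at x)" if "x \<in> \<Omega>" for x
    using assms(1,3) that by (auto intro: differentiable_on_openD)
  define F where "F x = partial i f x * \<phi> x + f x * partial i \<phi> x" for x
  have "partial i (\<lambda>x. f x * \<phi> x) x = F x" for x
  proof (cases "x \<in> K")
    case True
    then show ?thesis
      using partial_mult[OF diff_f diff_\<phi>[of _ "[]"], of x i] K(3) by (auto simp: F_def)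
  next
    case False
    have "dpart [i] (\<lambda>x. f x * \<phi> x) x = 0"
      by (rule dpart_eq_0_outside[OF K(2) _ False]) (use vanish[of _ "[]"] in simp)
    then show ?thesis using vanish[OF False, of "[]"] vanish[OF False, of "[i]"] by (simp add: F_def)
  qed
  then have partial_F: "partial i (\<lambda>x. f x * \<phi> x) = F" by blast
  have "(LINT x|lborel. F x) = 0"
  proof -
    have "continuous_on \<Omega> F"
      using assms(4) differentiable_imp_continuous_on[OF assms(3)] cont_\<phi>[of "[]"] cont_\<phi>[of "[i]"]
      unfolding F_def by (auto intro!: continuous_on_add continuous_on_mult)
    moreover have "(\<lambda>x. f x * \<phi> x) differentiable_on \<Omega>"
      using diff_f diff_\<phi>[of _ "[]"]
      by (auto intro!: differentiable_at_imp_differentiable_on differentiable_mult)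
    ultimately show ?thesis
      using integral_partial_eq_0_open[OF assms(1) K(1,3), of "\<lambda>x. f x * \<phi> x" i] vanish[of _ "[]"]
      unfolding partial_F by simp
  qed
  moreover have "integrable lborel (\<lambda>x. partial i f x * \<phi> x)"
    by (rule integrable_mult_test_function[OF assms(2,4)])
  moreover have "integrable lborel (\<lambda>x. f x * partial i \<phi> x)"
    using assms(3) by (intro integrable_mult_test_function[OF test_function_partial[OF assms(2)]])
      (rule differentiable_imp_continuous_on)
  ultimately show ?thesis by (simp add: F_def)
qed

lemma integral_lap_mult_test_function:
  assumes "open \<Omega>" "test_function \<Omega> \<phi>" "C2_on \<Omega> u"
  shows "(LINT x|lborel. lap u x * \<phi> x) = (LINT x|lborel. u x * lap \<phi> x)"
proof -
  have u: "u differentiable_on \<Omega>" "partial k u differentiable_on \<Omega>"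
    "continuous_on \<Omega> (partial k (partial k u))" for k
    using assms(3) by (auto simp: C2_on_def)
  have test: "test_function \<Omega> (partial k \<phi>)" "test_function \<Omega> (partial k (partial k \<phi>))" for k
    using assms(2) by (auto intro: test_function_partial)
  have twice: "(LINT x|lborel. partial k (partial k u) x * \<phi> x)
      = (LINT x|lborel. u x * partial k (partial k \<phi>) x)" for k
  proof -
    have "(LINT x|lborel. partial k (partial k u) x * \<phi> x)
        = - (LINT x|lborel. partial k u x * partial k \<phi> x)"
      by (rule integral_partial_mult_test_function[OF assms(1,2) u(2,3)])
    also have "\<dots> = (LINT x|lborel. u x * partial k (partial k \<phi>) x)"
      using integral_partial_mult_test_function[OF assms(1) test(1) u(1)]
        differentiable_imp_continuous_on[OF u(2)] by simp
    finally show ?thesis .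
  qed
  have "(LINT x|lborel. lap u x * \<phi> x) = (\<Sum>k\<in>UNIV. LINT x|lborel. partial k (partial k u) x * \<phi> x)"
    unfolding lap_def sum_distrib_right
    by (rule Bochner_Integration.integral_sum) (rule integrable_mult_test_function[OF assms(2) u(3)])
  also have "\<dots> = (\<Sum>k\<in>UNIV. LINT x|lborel. u x * partial k (partial k \<phi>) x)"
    by (simp add: twice)
  also have "\<dots> = (LINT x|lborel. u x * lap \<phi> x)"
    unfolding lap_def sum_distrib_left
    by (rule Bochner_Integration.integral_sum[symmetric])
      (simp add: mult.commute integrable_mult_test_function[OF test(2)]
        differentiable_imp_continuous_on[OF u(1)])
  finally show ?thesis .
qed

lemma integral_grad_sq_mult_test_function:
  assumes "open \<Omega>" "harmonic_on \<Omega> p" "test_function \<Omega> \<phi>"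
  shows "(LINT x|lborel. grad_sq m p x * \<phi> x) = 1 / 2 ^ m * (LINT x|lborel. (p x)\<^sup>2 * (lap ^^ m) \<phi> x)"
  using assms(3)
proof (induction m arbitrary: \<phi>)
  case 0
  have "{is :: 'a list. length is = 0} = {[]}" by auto
  then show ?case by (simp add: grad_sq_def)
next
  case (Suc m)
  have "(\<lambda>x. grad_sq (Suc m) p x * \<phi> x) = (\<lambda>x. 1 / 2 * (lap (grad_sq m p) x * \<phi> x))"
    using lap_grad_sq[OF assms(1,2), of _ m] test_function_vanishing[OF Suc.prems]
    by (force simp: fun_eq_iff)
  then have "(LINT x|lborel. grad_sq (Suc m) p x * \<phi> x)
      = 1 / 2 * (LINT x|lborel. lap (grad_sq m p) x * \<phi> x)"
    by simp
  also have "\<dots> = 1 / 2 * (LINT x|lborel. grad_sq m p x * lap \<phi> x)"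
    using assms(2) unfolding harmonic_on_def
    by (simp add: integral_lap_mult_test_function[OF assms(1) Suc.prems C2_on_grad_sq[OF assms(1)]])
  also have "\<dots> = 1 / 2 ^ Suc m * (LINT x|lborel. (p x)\<^sup>2 * (lap ^^ m) (lap \<phi>) x)"
    using Suc.IH[OF test_function_lap[OF assms(1) Suc.prems]] by simp
  also have "(lap ^^ m) (lap \<phi>) = (lap ^^ Suc m) \<phi>" by (simp only: funpow_Suc_right comp_def)
  finally show ?case .
qed

theorem lemmaA1:
  fixes \<Omega> :: "(real^'n::finite) set" and p \<phi> :: "real^'n \<Rightarrow> real" and m :: nat
  assumes "open \<Omega>" and "L2_on \<Omega> p" and "harmonic_on \<Omega> p" and "test_function \<Omega> \<phi>"
  shows "(LINT x:\<Omega>|lborel. grad_sq m p x * \<phi> x)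
       = (1 / 2 ^ m) * (LINT x:\<Omega>|lborel. (p x)\<^sup>2 * (lap ^^ m) \<phi> x)"
proof -
  have "test_function \<Omega> ((lap ^^ m) \<phi>)" by (rule test_function_funpow_lap[OF assms(1,4)])
  then have "(\<lambda>x. indicator \<Omega> x *\<^sub>R ((p x)\<^sup>2 * (lap ^^ m) \<phi> x)) = (\<lambda>x. (p x)\<^sup>2 * (lap ^^ m) \<phi> x)"
    by (auto simp: fun_eq_iff indicator_def test_function_vanishing)
  moreover have "(\<lambda>x. indicator \<Omega> x *\<^sub>R (grad_sq m p x * \<phi> x)) = (\<lambda>x. grad_sq m p x * \<phi> x)"
    using assms(4) by (auto simp: fun_eq_iff indicator_def test_function_vanishing)
  ultimately show ?thesis
    unfolding set_lebesgue_integral_def by (simp add: integral_grad_sq_mult_test_function[OF assms(1,3,4)])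
qed

end
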